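(* Let $X\subseteq U$ be a fixed set of $|X|=m$ keys (balls), let $h:U\to[n]$ be a simple tabulation hash function, and let $y\in[n]$ be any fixed bin. If $p$ denotes the probability that $y\in h(X)$, then $$|p-p_0|\le \frac{m^{2-1/c}}{n^2},\qquad\text{and hence}\qquad \bigl|\mathbb{E}[|h(X)|]-\mu_0\bigr|\le \frac{m^{2-1/c}}{n}.$$ Moreover, if $q\in U\setminus X$ is a distinguished query key and the bin $y$ is allowed to depend on $h(q)$ (e.g. $y=h(q)$), i.e. for every $z\in[n]$, conditioned on $h(q)=z$ the bin $y$ is a fixed function of $z$ and $p$ denotes the conditional probability that $y\in h(X)$, then the weaker bound $|p-p_0|\le \frac{2m^{2-1/c}}{n^2}$ holds.
   Context: Simple tabulation hashing: the key universe is $U=[u]=\{0,\dots,u-1\}$, and each key $x\in U$ is viewed as a vector $(x[0],\dots,x[c-1])$ of $c=O(1)$ characters, each $x[i]\in\Sigma=[u^{1/c}]$. The range is $[n]=[2^r]$, viewed as $r$-bit strings. A simple tabulation hash function is $h(x)=h_0(x[0])\oplus\cdots\oplus h_{c-1}(x[c-1])$, where $h_0,\dots,h_{c-1}:\Sigma\to[2^r]$ are independent fully random functions and $\oplus$ is bitwise XOR. Notation: $p_0=1-(1-1/n)^m$ and $\mu_0=np_0$ (the probability a given bin is non-empty, resp. the expected number of non-empty bins, when $m$ balls are hashed fully randomly into $n$ bins). *)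

theory Defs
  imports "HOL-Probability.Probability"
begin

text \<open>Keys of U = [s^c] are vectors (lists) of c characters from Sigma = [s] = {0..<s}.\<close>
definition tab_keys :: "nat \<Rightarrow> nat \<Rightarrow> nat list set" where
  "tab_keys c s = {x. length x = c \<and> (\<forall>i<c. x ! i < s)}"

text \<open>Tables: c functions h_i : [s] \<rightarrow> [2^r] (extensional outside their domains).\<close>
definition tab_tables :: "nat \<Rightarrow> nat \<Rightarrow> nat \<Rightarrow> (nat \<Rightarrow> nat \<Rightarrow> nat) set" where
  "tab_tables c s r = PiE {0..<c} (\<lambda>_. PiE {0..<s} (\<lambda>_. {0..<(2::nat)^r}))"

text \<open>Uniform distribution over tables = independent fully random h_0,...,h_{c-1}.\<close>
definition tab_pmf :: "nat \<Rightarrow> nat \<Rightarrow> nat \<Rightarrow> (nat \<Rightarrow> nat \<Rightarrow> nat) pmf" where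
  "tab_pmf c s r = pmf_of_set (tab_tables c s r)"

definition tab_hash :: "nat \<Rightarrow> (nat \<Rightarrow> nat \<Rightarrow> nat) \<Rightarrow> nat list \<Rightarrow> nat" where
  "tab_hash c T x = foldr (\<lambda>i acc. Bit_Operations.xor (T i (x ! i)) acc) [0..<c] 0"

definition p0 :: "nat \<Rightarrow> nat \<Rightarrow> real" where
  "p0 n m = 1 - (1 - 1 / real n) ^ m"

end

(*
  Since tab_pmf is uniform, probabilities are ratios of numbers of tables.  Let W be the
  conditioning event (trivial, or h(q) = z), and call a position j of a key x free if
  x[j] differs from q[j].  The entry T_j(x[j]) at a free position is uniform and independent
  of every event that does not read it, so h(x) is uniform given such an event.

  Insert the keys one at a time, each with a free position j(x).  Apart from the keys sharing
  the character x[j(x)], the event "bin y is already hit" does not read T_j(x[j]); hence adding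
  x multiplies the probability that y stays empty by exactly 1 - 1/n, up to an error of k/n^2,
  where k counts the earlier keys sharing that character.  Choosing j(x) to minimise the number
  d(x) of keys sharing the character and averaging an order with its reverse, the total error
  is at most sum_x (d(x) - 1) / (2 n^2).  A key with d(x) >= t has, at every free position,
  a character occurring at least t times, and there are at most m/t of those; hence at most
  (beta m/t)^c such keys (beta = 1 without the query key, 2 with it), and summing over t gives
  sum_x (d(x) - 1) <= 2 beta m^(2 - 1/c).
*)
theory Submission
  imports Defs
begin

unbundle bit_operations_syntax

section \<open>Hash values under a change of one table entry\<close>

lemma xor_cancel_left: "(a::nat) XOR (a XOR b) = b"
  by (simp flip: xor.assoc)

lemma xor_cancel_right: "((a::nat) XOR b) XOR b = a"
  by (simp add: xor.assoc)

lemma xor_left_cancel_iff: "((a::nat) XOR b = a XOR c) \<longleftrightarrow> b = c"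
  by (metis xor_cancel_left)

lemma xor_eq_iff: "((a::nat) XOR b = d) \<longleftrightarrow> a = d XOR b"
  by (metis xor_cancel_right)

lemma xor_less_two_power: "(a::nat) < 2 ^ r \<Longrightarrow> b < 2 ^ r \<Longrightarrow> a XOR b < 2 ^ r"
  by (metis take_bit_nat_eq_self take_bit_nat_less_exp take_bit_xor)

definition xor_fold :: "nat list \<Rightarrow> (nat \<Rightarrow> nat) \<Rightarrow> nat" where
  "xor_fold L f = foldr (\<lambda>i acc. f i XOR acc) L 0"

lemma xor_fold_Nil [simp]: "xor_fold [] f = 0"
  and xor_fold_Cons [simp]: "xor_fold (i # L) f = f i XOR xor_fold L f"
  by (simp_all add: xor_fold_def)

lemma xor_fold_cong: "(\<And>i. i \<in> set L \<Longrightarrow> f i = g i) \<Longrightarrow> xor_fold L f = xor_fold L g"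
  by (induction L) auto

lemma xor_fold_update:
  "j \<in> set L \<Longrightarrow> distinct L \<Longrightarrow> xor_fold L (f(j := v)) = (v XOR f j) XOR xor_fold L f"
proof (induction L)
  case (Cons i L)
  show ?case
  proof (cases "i = j")
    case True
    with Cons.prems have "xor_fold L (f(j := v)) = xor_fold L f"
      by (intro xor_fold_cong) auto
    with True show ?thesis
      by (simp add: xor_cancel_right fun_upd_def flip: xor.assoc)
  next
    case False
    with Cons show ?thesis
      by (simp add: xor.left_commute)
  qed
qed simp

lemma xor_fold_less_two_power:
  "(\<And>i. i \<in> set L \<Longrightarrow> f i < 2 ^ r) \<Longrightarrow> xor_fold L f < 2 ^ r"
  by (induction L) (auto intro: xor_less_two_power)

lemma tab_hash_eq_xor_fold: "tab_hash c T x = xor_fold [0..<c] (\<lambda>i. T i (x ! i))"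
  by (simp add: tab_hash_def xor_fold_def)

definition tab_upd :: "(nat \<Rightarrow> nat \<Rightarrow> nat) \<Rightarrow> nat \<Rightarrow> nat \<Rightarrow> nat \<Rightarrow> nat \<Rightarrow> nat \<Rightarrow> nat" where
  "tab_upd T j a v = T(j := (T j)(a := v))"

lemma tab_upd_self: "T j a = v \<Longrightarrow> tab_upd T j a v = T"
  by (auto simp: tab_upd_def)

lemma tab_upd_upd: "tab_upd (tab_upd T j a v) j a w = tab_upd T j a w"
  by (simp add: tab_upd_def)

lemma tab_upd_same: "tab_upd T j a v j a = v"
  by (simp add: tab_upd_def)

lemma tab_hash_upd_other: "x ! j \<noteq> a \<Longrightarrow> tab_hash c (tab_upd T j a v) x = tab_hash c T x"
  unfolding tab_hash_eq_xor_fold by (intro xor_fold_cong) (auto simp: tab_upd_def)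

lemma tab_hash_upd:
  assumes "j < c" "x ! j = a"
  shows "tab_hash c (tab_upd T j a v) x = (v XOR T j a) XOR tab_hash c T x"
proof -
  have "(\<lambda>i. tab_upd T j a v i (x ! i)) = (\<lambda>i. T i (x ! i))(j := v)"
    using assms by (auto simp: tab_upd_def)
  then show ?thesis
    using assms by (simp add: tab_hash_eq_xor_fold xor_fold_update)
qed

lemma finite_tab_tables: "finite (tab_tables c s r)"
  unfolding tab_tables_def by (intro finite_PiE) auto

lemma tab_tables_nonempty: "tab_tables c s r \<noteq> {}"
  unfolding tab_tables_def by (simp add: PiE_eq_empty_iff)

lemma tab_tables_entry_less: "T \<in> tab_tables c s r \<Longrightarrow> i < c \<Longrightarrow> a < s \<Longrightarrow> T i a < 2 ^ r"
  unfolding tab_tables_def by (auto simp: PiE_iff)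

lemma tab_upd_in_tab_tables:
  "T \<in> tab_tables c s r \<Longrightarrow> j < c \<Longrightarrow> a < s \<Longrightarrow> v < 2 ^ r \<Longrightarrow> tab_upd T j a v \<in> tab_tables c s r"
  unfolding tab_tables_def tab_upd_def by (auto simp: PiE_iff extensional_def)

lemma tab_keys_nth_less: "x \<in> tab_keys c s \<Longrightarrow> i < c \<Longrightarrow> x ! i < s"
  unfolding tab_keys_def by auto

lemma tab_keys_length: "x \<in> tab_keys c s \<Longrightarrow> length x = c"
  unfolding tab_keys_def by auto

lemma finite_tab_keys: "finite (tab_keys c s)"
proof -
  have "tab_keys c s \<subseteq> {xs. set xs \<subseteq> {0..<s} \<and> length xs = c}"
    unfolding tab_keys_def by (auto simp: in_set_conv_nth)
  then show ?thesis
    using finite_lists_length_eq[of "{0..<s}" c] finite_subset by auto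
qed

lemma tab_keys_nth_neq:
  assumes "k \<in> tab_keys c s" "x \<in> tab_keys c s" "k \<noteq> x"
  obtains j where "j < c" "k ! j \<noteq> x ! j"
  using assms nth_equalityI[of k x] by (auto simp: tab_keys_def)

lemma tab_hash_less: "T \<in> tab_tables c s r \<Longrightarrow> x \<in> tab_keys c s \<Longrightarrow> tab_hash c T x < 2 ^ r"
  unfolding tab_hash_eq_xor_fold
  by (intro xor_fold_less_two_power) (auto intro: tab_tables_entry_less tab_keys_nth_less)

section \<open>Counting tables\<close>

definition tab_count :: "nat \<Rightarrow> nat \<Rightarrow> nat \<Rightarrow> ((nat \<Rightarrow> nat \<Rightarrow> nat) \<Rightarrow> bool) \<Rightarrow> real" where
  "tab_count c s r P = real (card {T \<in> tab_tables c s r. P T})"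

lemma finite_tab_tables_Collect: "finite {T \<in> tab_tables c s r. P T}"
  using finite_tab_tables by simp

lemma tab_count_nonneg: "0 \<le> tab_count c s r P"
  by (simp add: tab_count_def)

lemma tab_count_True_pos: "0 < tab_count c s r (\<lambda>_. True)"
  unfolding tab_count_def using tab_tables_nonempty finite_tab_tables by (simp add: card_gt_0_iff)

lemma tab_count_cong:
  "(\<And>T. T \<in> tab_tables c s r \<Longrightarrow> P T = Q T) \<Longrightarrow> tab_count c s r P = tab_count c s r Q"
  unfolding tab_count_def by (metis (mono_tags, lifting) Collect_cong)

lemma tab_count_mono:
  "(\<And>T. T \<in> tab_tables c s r \<Longrightarrow> P T \<Longrightarrow> Q T) \<Longrightarrow> tab_count c s r P \<le> tab_count c s r Q"
  unfolding tab_count_def by (intro of_nat_mono card_mono finite_tab_tables_Collect) blast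

lemma tab_count_split:
  "tab_count c s r P = tab_count c s r (\<lambda>T. P T \<and> Q T) + tab_count c s r (\<lambda>T. P T \<and> \<not> Q T)"
proof -
  have "{T \<in> tab_tables c s r. P T}
      = {T \<in> tab_tables c s r. P T \<and> Q T} \<union> {T \<in> tab_tables c s r. P T \<and> \<not> Q T}"
    by blast
  then show ?thesis
    unfolding tab_count_def
    by (simp add: card_Un_disjoint finite_tab_tables_Collect disjoint_iff flip: of_nat_add)
qed

lemma tab_count_disj_le:
  "tab_count c s r (\<lambda>T. P T \<or> Q T) \<le> tab_count c s r P + tab_count c s r Q"
proof -
  have "{T \<in> tab_tables c s r. P T \<or> Q T} = {T \<in> tab_tables c s r. P T} \<union> {T \<in> tab_tables c s r. Q T}"
    by auto
  then have "card {T \<in> tab_tables c s r. P T \<or> Q T}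
      \<le> card {T \<in> tab_tables c s r. P T} + card {T \<in> tab_tables c s r. Q T}"
    by (simp only: card_Un_le)
  then show ?thesis
    unfolding tab_count_def by linarith
qed

lemma tab_count_bex_le:
  "finite K \<Longrightarrow> tab_count c s r (\<lambda>T. \<exists>k\<in>K. P k T) \<le> (\<Sum>k\<in>K. tab_count c s r (P k))"
proof (induction K rule: finite_induct)
  case empty
  then show ?case by (simp add: tab_count_def)
next
  case (insert k K)
  have "tab_count c s r (\<lambda>T. \<exists>k'\<in>insert k K. P k' T)
      = tab_count c s r (\<lambda>T. P k T \<or> (\<exists>k'\<in>K. P k' T))"
    by (intro tab_count_cong) auto
  also have "\<dots> \<le> tab_count c s r (P k) + tab_count c s r (\<lambda>T. \<exists>k'\<in>K. P k' T)"
    by (rule tab_count_disj_le)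
  finally show ?case
    using insert by simp
qed

lemma prob_tab_pmf:
  "measure_pmf.prob (tab_pmf c s r) {T. P T} = tab_count c s r P / tab_count c s r (\<lambda>_. True)"
  unfolding tab_pmf_def tab_count_def
  by (simp add: measure_pmf_of_set[OF tab_tables_nonempty finite_tab_tables] Int_def conj_commute)

lemma cond_pmf_of_set:
  assumes "finite S" "S \<inter> A \<noteq> {}"
  shows "cond_pmf (pmf_of_set S) A = pmf_of_set (S \<inter> A)"
proof (rule pmf_eqI)
  fix x
  have "S \<noteq> {}" "0 < card (S \<inter> A)"
    using assms by (auto simp: card_gt_0_iff)
  moreover have "set_pmf (pmf_of_set S) \<inter> A \<noteq> {}"
    using assms by (subst set_pmf_of_set) auto
  ultimately show "pmf (cond_pmf (pmf_of_set S) A) x = pmf (pmf_of_set (S \<inter> A)) x"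
    using assms by (auto simp: pmf_cond measure_pmf_of_set indicator_def field_simps)
qed

lemma prob_cond_tab_pmf:
  assumes "0 < tab_count c s r W"
  shows "measure_pmf.prob (cond_pmf (tab_pmf c s r) {T. W T}) {T. P T}
       = tab_count c s r (\<lambda>T. W T \<and> P T) / tab_count c s r W"
proof -
  have ne: "tab_tables c s r \<inter> {T. W T} \<noteq> {}"
    using assms by (auto simp: tab_count_def Int_def card_gt_0_iff)
  show ?thesis
    unfolding tab_pmf_def cond_pmf_of_set[OF finite_tab_tables ne]
    by (subst measure_pmf_of_set) (use ne finite_tab_tables in \<open>auto simp: tab_count_def Int_def conj_assoc\<close>)
qed

definition entry_invariant :: "nat \<Rightarrow> nat \<Rightarrow> ((nat \<Rightarrow> nat \<Rightarrow> nat) \<Rightarrow> 'b) \<Rightarrow> bool" where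
  "entry_invariant j a P \<longleftrightarrow> (\<forall>T v. P (tab_upd T j a v) = P T)"

lemma entry_invariant_const: "entry_invariant j a (\<lambda>_. y)"
  by (simp add: entry_invariant_def)

lemma entry_invariant_hash_other:
  "x ! j \<noteq> a \<Longrightarrow> entry_invariant j a (\<lambda>T. P (tab_hash c T x))"
  by (simp add: entry_invariant_def tab_hash_upd_other)

lemma entry_invariant_mem_hash_image:
  "(\<And>k. k \<in> K \<Longrightarrow> k ! j \<noteq> a) \<Longrightarrow> entry_invariant j a (\<lambda>T. y \<in> tab_hash c T ` K)"
  unfolding entry_invariant_def by (metis (mono_tags, lifting) image_cong tab_hash_upd_other)

lemma entry_invariant_hash_eq:
  assumes "j < c" "k ! j = a" "x ! j = a"
  shows "entry_invariant j a (\<lambda>T. tab_hash c T k = tab_hash c T x)"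
  unfolding entry_invariant_def
  using assms by (simp add: tab_hash_upd xor_left_cancel_iff)

lemma card_tab_tables_by_entry:
  assumes "j < c" "a < s"
  shows "card {T \<in> tab_tables c s r. P T} =
    (\<Sum>T\<in>{T \<in> tab_tables c s r. T j a = 0}. card {v \<in> {0..<2 ^ r}. P (tab_upd T j a v)})"
proof -
  let ?S = "tab_tables c s r"
  let ?D = "SIGMA T:{T \<in> ?S. T j a = 0}. {v \<in> {0..<2 ^ r}. P (tab_upd T j a v)}"
  let ?\<phi> = "\<lambda>(T, v). tab_upd T j a v"
  have inj: "inj_on ?\<phi> ?D"
    by (rule inj_on_inverseI[where g = "\<lambda>T. (tab_upd T j a 0, T j a)"])
      (auto simp: tab_upd_self tab_upd_upd tab_upd_same)
  have image: "?\<phi> ` ?D = {T \<in> ?S. P T}"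
  proof
    show "?\<phi> ` ?D \<subseteq> {T \<in> ?S. P T}"
      using assms by (auto intro!: tab_upd_in_tab_tables)
    show "{T \<in> ?S. P T} \<subseteq> ?\<phi> ` ?D"
    proof clarify
      fix T assume T: "T \<in> ?S" "P T"
      have "(tab_upd T j a 0, T j a) \<in> ?D"
        using T assms tab_upd_in_tab_tables[OF T(1) assms, of 0] tab_tables_entry_less[OF T(1) assms]
        by (simp add: tab_upd_self tab_upd_upd tab_upd_same)
      moreover have "T = ?\<phi> (tab_upd T j a 0, T j a)"
        by (simp add: tab_upd_self tab_upd_upd)
      ultimately show "T \<in> ?\<phi> ` ?D"
        by blast
    qed
  qed
  have "card {T \<in> ?S. P T} = card ?D"
    using card_image[OF inj] image by simp
  also have "\<dots> = (\<Sum>T\<in>{T \<in> ?S. T j a = 0}. card {v \<in> {0..<2 ^ r}. P (tab_upd T j a v)})"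
    by (rule card_SigmaI) (auto intro: finite_tab_tables finite_subset[OF _ finite_tab_tables])
  finally show ?thesis .
qed

text \<open>The entry \<open>T j (x ! j)\<close> is uniform and independent of every event that does not read it,
  so it makes \<open>tab_hash c T x\<close> uniform conditioned on such an event.\<close>
lemma tab_count_hash_eq:
  assumes j: "j < c" and x: "x \<in> tab_keys c s" and a: "x ! j = a"
    and E: "entry_invariant j a E" and g: "entry_invariant j a g"
    and g_less: "\<And>T. T \<in> tab_tables c s r \<Longrightarrow> g T < 2 ^ r"
  shows "tab_count c s r (\<lambda>T. tab_hash c T x = g T \<and> E T) = tab_count c s r E / 2 ^ r"
proof -
  let ?Z = "{T \<in> tab_tables c s r. T j a = 0}"
  have as: "a < s"
    using x j a tab_keys_nth_less by blast
  have "card {T \<in> tab_tables c s r. E T} = (\<Sum>T\<in>?Z. if E T then 2 ^ r else 0)"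
    unfolding card_tab_tables_by_entry[OF j as] using E by (intro sum.cong) (auto simp: entry_invariant_def)
  also have "\<dots> = 2 ^ r * card {T \<in> ?Z. E T}"
    by (simp add: sum.If_cases finite_tab_tables Int_def conj_commute)
  finally have count_E: "card {T \<in> tab_tables c s r. E T} = 2 ^ r * card {T \<in> ?Z. E T}" .
  have fibre: "{v \<in> {0..<2 ^ r}. tab_hash c (tab_upd T j a v) x = g (tab_upd T j a v) \<and> E (tab_upd T j a v)}
      = (if E T then {g T XOR tab_hash c T x} else {})" if T: "T \<in> ?Z" for T
  proof -
    have "tab_hash c (tab_upd T j a v) x = v XOR tab_hash c T x" for v
      using T tab_hash_upd[OF j a] by simp
    moreover have "tab_hash c T x < 2 ^ r" "g T < 2 ^ r"
      using T x g_less tab_hash_less by auto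
    ultimately show ?thesis
      using E g by (auto simp: entry_invariant_def xor_eq_iff intro: xor_less_two_power)
  qed
  have "card {T \<in> tab_tables c s r. tab_hash c T x = g T \<and> E T} = (\<Sum>T\<in>?Z. if E T then 1 else 0)"
    unfolding card_tab_tables_by_entry[OF j as] by (intro sum.cong refl) (simp only: fibre, simp)
  also have "\<dots> = card {T \<in> ?Z. E T}"
    by (simp add: sum.If_cases finite_tab_tables Int_def conj_commute)
  finally show ?thesis
    using count_E unfolding tab_count_def by simp
qed

lemma tab_count_hash_eq_const:
  assumes "k \<in> tab_keys c s" "j < c" "entry_invariant j (k ! j) W" "y < 2 ^ r"
  shows "tab_count c s r (\<lambda>T. W T \<and> tab_hash c T k = y) = tab_count c s r W / 2 ^ r"
proof -
  have "tab_count c s r (\<lambda>T. W T \<and> tab_hash c T k = y) = tab_count c s r (\<lambda>T. tab_hash c T k = y \<and> W T)"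
    by (intro tab_count_cong) auto
  also have "\<dots> = tab_count c s r W / 2 ^ r"
    using assms by (intro tab_count_hash_eq[OF _ _ refl]) (auto intro: entry_invariant_const)
  finally show ?thesis .
qed

lemma tab_count_hash_collision:
  assumes "k \<in> tab_keys c s" "x \<in> tab_keys c s" "j < c" "k ! j \<noteq> x ! j"
    and "entry_invariant j (x ! j) W"
  shows "tab_count c s r (\<lambda>T. W T \<and> tab_hash c T k = tab_hash c T x) = tab_count c s r W / 2 ^ r"
proof -
  have "tab_count c s r (\<lambda>T. W T \<and> tab_hash c T k = tab_hash c T x)
      = tab_count c s r (\<lambda>T. tab_hash c T x = tab_hash c T k \<and> W T)"
    by (intro tab_count_cong) auto
  also have "\<dots> = tab_count c s r W / 2 ^ r"
    using assms
    by (intro tab_count_hash_eq[OF _ _ refl]) (auto intro: entry_invariant_hash_other tab_hash_less)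
  finally show ?thesis .
qed

section \<open>Adding keys one at a time\<close>

lemma tab_count_disj_bex_bounds:
  assumes "finite K"
    and uniform: "\<And>k. k \<in> K \<Longrightarrow> tab_count c s r (\<lambda>T. W T \<and> P k T) = tab_count c s r W / 2 ^ r"
  shows "tab_count c s r (\<lambda>T. W T \<and> A T) \<le> tab_count c s r (\<lambda>T. W T \<and> (A T \<or> (\<exists>k\<in>K. P k T)))"
    and "tab_count c s r (\<lambda>T. W T \<and> (A T \<or> (\<exists>k\<in>K. P k T)))
      \<le> tab_count c s r (\<lambda>T. W T \<and> A T) + card K * tab_count c s r W / 2 ^ r"
proof -
  let ?N = "tab_count c s r"
  show "?N (\<lambda>T. W T \<and> A T) \<le> ?N (\<lambda>T. W T \<and> (A T \<or> (\<exists>k\<in>K. P k T)))"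
    by (intro tab_count_mono) auto
  have "?N (\<lambda>T. W T \<and> (A T \<or> (\<exists>k\<in>K. P k T))) \<le> ?N (\<lambda>T. (W T \<and> A T) \<or> (\<exists>k\<in>K. W T \<and> P k T))"
    by (intro tab_count_mono) auto
  also have "\<dots> \<le> ?N (\<lambda>T. W T \<and> A T) + ?N (\<lambda>T. \<exists>k\<in>K. W T \<and> P k T)"
    by (rule tab_count_disj_le)
  also have "?N (\<lambda>T. \<exists>k\<in>K. W T \<and> P k T) \<le> (\<Sum>k\<in>K. ?N (\<lambda>T. W T \<and> P k T))"
    using assms(1) by (rule tab_count_bex_le)
  also have "\<dots> = card K * ?N W / 2 ^ r"
    using uniform by simp
  finally show "?N (\<lambda>T. W T \<and> (A T \<or> (\<exists>k\<in>K. P k T))) \<le> ?N (\<lambda>T. W T \<and> A T) + card K * ?N W / 2 ^ r"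
    by simp
qed

text \<open>In the application \<open>Y\<close> is the event that bin \<open>y\<close> is already hit by the earlier keys.\<close>
lemma tab_count_miss_step_eq:
  assumes j: "j < c" and x: "x \<in> tab_keys c s" and y: "y < 2 ^ r"
    and W: "entry_invariant j (x ! j) W" and E: "entry_invariant j (x ! j) E"
    and YE: "\<And>T. tab_hash c T x = y \<Longrightarrow> Y T = E T"
  shows "tab_count c s r (\<lambda>T. W T \<and> \<not> Y T \<and> tab_hash c T x \<noteq> y)
      - (1 - 1 / 2 ^ r) * tab_count c s r (\<lambda>T. W T \<and> \<not> Y T)
    = (tab_count c s r (\<lambda>T. W T \<and> E T) - tab_count c s r (\<lambda>T. W T \<and> Y T)) / 2 ^ r"
proof -
  let ?N = "tab_count c s r" and ?h = "\<lambda>T. tab_hash c T x"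
  have uniform: "?N (\<lambda>T. ?h T = y \<and> F T) = ?N F / 2 ^ r" if "entry_invariant j (x ! j) F" for F
    using j x that y by (intro tab_count_hash_eq) (auto intro: entry_invariant_const)
  have "?N (\<lambda>T. W T \<and> \<not> Y T) = ?N (\<lambda>T. W T \<and> \<not> Y T \<and> ?h T \<noteq> y) + ?N (\<lambda>T. W T \<and> \<not> Y T \<and> ?h T = y)"
    using tab_count_split[of c s r "\<lambda>T. W T \<and> \<not> Y T" "\<lambda>T. ?h T \<noteq> y"] by (simp add: conj_assoc)
  moreover have "?N (\<lambda>T. ?h T = y \<and> W T) = ?N (\<lambda>T. W T \<and> \<not> Y T \<and> ?h T = y) + ?N (\<lambda>T. ?h T = y \<and> W T \<and> E T)"
  proof -
    have "?N (\<lambda>T. ?h T = y \<and> W T \<and> \<not> Y T) = ?N (\<lambda>T. W T \<and> \<not> Y T \<and> ?h T = y)"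
      "?N (\<lambda>T. ?h T = y \<and> W T \<and> Y T) = ?N (\<lambda>T. ?h T = y \<and> W T \<and> E T)"
      using YE by (auto intro: tab_count_cong)
    then show ?thesis
      using tab_count_split[of c s r "\<lambda>T. ?h T = y \<and> W T" Y] by (simp add: conj_assoc)
  qed
  moreover have "?N W = ?N (\<lambda>T. W T \<and> Y T) + ?N (\<lambda>T. W T \<and> \<not> Y T)"
    by (rule tab_count_split)
  moreover have "entry_invariant j (x ! j) (\<lambda>T. W T \<and> E T)"
    using W E by (simp add: entry_invariant_def)
  ultimately show ?thesis
    using uniform[OF W] by (simp add: uniform field_simps)
qed

lemma tab_count_miss_insert:
  fixes W :: "(nat \<Rightarrow> nat \<Rightarrow> nat) \<Rightarrow> bool"
  assumes j: "j < c" and x: "x \<in> tab_keys c s" and S: "finite S" and y: "y < 2 ^ r"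
    and W: "entry_invariant j (x ! j) W"
    and collision: "\<And>k. k \<in> S \<Longrightarrow> k ! j = x ! j \<Longrightarrow>
      tab_count c s r (\<lambda>T. W T \<and> tab_hash c T k = tab_hash c T x) = tab_count c s r W / 2 ^ r"
    and hit: "\<And>k. k \<in> S \<Longrightarrow> k ! j = x ! j \<Longrightarrow>
      tab_count c s r (\<lambda>T. W T \<and> tab_hash c T k = y) = tab_count c s r W / 2 ^ r"
  shows "\<bar>tab_count c s r (\<lambda>T. W T \<and> y \<notin> tab_hash c T ` insert x S)
      - (1 - 1 / 2 ^ r) * tab_count c s r (\<lambda>T. W T \<and> y \<notin> tab_hash c T ` S)\<bar>
    \<le> card {k \<in> S. k ! j = x ! j} * tab_count c s r W / (2 ^ r) ^ 2"
proof -
  let ?N = "tab_count c s r" and ?h = "tab_hash c"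
  define K where "K = {k \<in> S. k ! j = x ! j}"
  define A where "A T \<longleftrightarrow> y \<in> ?h T ` (S - K)" for T
  define E where "E T \<longleftrightarrow> A T \<or> (\<exists>k\<in>K. ?h T k = ?h T x)" for T
  define Y where "Y T \<longleftrightarrow> A T \<or> (\<exists>k\<in>K. ?h T k = y)" for T
  have "finite K"
    using S by (simp add: K_def)
  have Y_iff: "Y T \<longleftrightarrow> y \<in> ?h T ` S" for T
    by (auto simp: Y_def A_def K_def)
  have "entry_invariant j (x ! j) A"
    unfolding A_def by (rule entry_invariant_mem_hash_image) (simp add: K_def)
  moreover have "entry_invariant j (x ! j) (\<lambda>T. ?h T k = ?h T x)" if "k \<in> K" for k
    using that j by (intro entry_invariant_hash_eq) (auto simp: K_def)
  ultimately have invE: "entry_invariant j (x ! j) E"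
    unfolding E_def entry_invariant_def by simp
  have YE: "Y T = E T" if "?h T x = y" for T
    using that by (simp add: Y_def E_def)
  have "?N (\<lambda>T. W T \<and> ?h T k = ?h T x) = ?N W / 2 ^ r" "?N (\<lambda>T. W T \<and> ?h T k = y) = ?N W / 2 ^ r"
    if "k \<in> K" for k
    using that collision hit by (simp_all add: K_def)
  then have "\<bar>?N (\<lambda>T. W T \<and> E T) - ?N (\<lambda>T. W T \<and> Y T)\<bar> \<le> card K * ?N W / 2 ^ r"
    using tab_count_disj_bex_bounds[OF \<open>finite K\<close>, of c s r W "\<lambda>k T. ?h T k = ?h T x" A]
      tab_count_disj_bex_bounds[OF \<open>finite K\<close>, of c s r W "\<lambda>k T. ?h T k = y" A]
    unfolding E_def Y_def by (smt (verit))
  then have "\<bar>?N (\<lambda>T. W T \<and> E T) - ?N (\<lambda>T. W T \<and> Y T)\<bar> / 2 ^ r \<le> card K * ?N W / 2 ^ r / 2 ^ r"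
    by (intro divide_right_mono) auto
  moreover have "?N (\<lambda>T. W T \<and> y \<notin> ?h T ` insert x S) = ?N (\<lambda>T. W T \<and> \<not> Y T \<and> ?h T x \<noteq> y)"
    "?N (\<lambda>T. W T \<and> y \<notin> ?h T ` S) = ?N (\<lambda>T. W T \<and> \<not> Y T)"
    by (auto simp: Y_iff intro: tab_count_cong)
  ultimately show ?thesis
    using tab_count_miss_step_eq[OF j x y W invE YE] by (simp add: K_def abs_divide power2_eq_square)
qed

primrec prior_count :: "('a \<Rightarrow> 'a \<Rightarrow> bool) \<Rightarrow> 'a list \<Rightarrow> nat" where
  "prior_count R [] = 0"
| "prior_count R (x # xs) = prior_count R xs + card {k \<in> set xs. R k x}"

lemma prior_count_snoc:
  "distinct (xs @ [x]) \<Longrightarrow> prior_count R (xs @ [x]) = prior_count R xs + card {z \<in> set xs. R x z}"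
proof (induction xs)
  case (Cons z zs)
  then have "{k \<in> set (zs @ [x]). R k z} = (if R x z then insert x else id) {k \<in> set zs. R k z}"
    "{z' \<in> set (z # zs). R x z'} = (if R x z then insert z else id) {z' \<in> set zs. R x z'}"
    by auto
  with Cons show ?case
    by auto
qed simp

lemma prior_count_add_rev:
  "distinct xs \<Longrightarrow> prior_count R xs + prior_count R (rev xs) = (\<Sum>x\<in>set xs. card {k \<in> set xs. k \<noteq> x \<and> R k x})"
proof (induction xs)
  case (Cons x ys)
  have others: "card {k \<in> set (x # ys). k \<noteq> z \<and> R k z} = card {k \<in> set ys. k \<noteq> z \<and> R k z} + (if R x z then 1 else 0)"
    if "z \<in> set ys" for z
  proof -
    have "{k \<in> set (x # ys). k \<noteq> z \<and> R k z} = (if R x z then insert x else id) {k \<in> set ys. k \<noteq> z \<and> R k z}"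
      using that Cons.prems by auto
    then show ?thesis
      using Cons.prems by simp
  qed
  have "{k \<in> set (x # ys). k \<noteq> x \<and> R k x} = {k \<in> set ys. R k x}"
    using Cons.prems by auto
  moreover have "(\<Sum>z\<in>set ys. card {k \<in> set (x # ys). k \<noteq> z \<and> R k z})
      = (\<Sum>z\<in>set ys. card {k \<in> set ys. k \<noteq> z \<and> R k z}) + card {z \<in> set ys. R x z}"
    by (subst sum.cong[OF refl others]) (simp_all add: sum.distrib sum.If_cases Int_def)
  ultimately have "(\<Sum>z\<in>set (x # ys). card {k \<in> set (x # ys). k \<noteq> z \<and> R k z})
      = card {k \<in> set ys. R k x} + (\<Sum>z\<in>set ys. card {k \<in> set ys. k \<noteq> z \<and> R k z}) + card {z \<in> set ys. R x z}"
    using Cons.prems by simp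
  then show ?case
    using Cons by (simp add: prior_count_snoc)
qed simp

lemma tab_count_miss_list:
  fixes W :: "(nat \<Rightarrow> nat \<Rightarrow> nat) \<Rightarrow> bool"
  assumes "distinct xs" "set xs \<subseteq> tab_keys c s" "y < 2 ^ r"
    and pos: "\<And>x. x \<in> set xs \<Longrightarrow> pos x < c \<and> entry_invariant (pos x) (x ! pos x) W"
    and collision: "\<And>k x. k \<in> set xs \<Longrightarrow> x \<in> set xs \<Longrightarrow> k \<noteq> x \<Longrightarrow>
      tab_count c s r (\<lambda>T. W T \<and> tab_hash c T k = tab_hash c T x) = tab_count c s r W / 2 ^ r"
  shows "\<bar>tab_count c s r (\<lambda>T. W T \<and> y \<notin> tab_hash c T ` set xs) - (1 - 1 / 2 ^ r) ^ length xs * tab_count c s r W\<bar>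
    \<le> tab_count c s r W / (2 ^ r) ^ 2 * prior_count (\<lambda>k x. k ! pos x = x ! pos x) xs"
  using assms
proof (induction xs)
  case Nil
  then show ?case by simp
next
  case (Cons x xs)
  let ?N = "tab_count c s r" and ?q = "1 - 1 / 2 ^ r :: real"
  define a where "a = ?N (\<lambda>T. W T \<and> y \<notin> tab_hash c T ` set xs)"
  have IH: "\<bar>a - ?q ^ length xs * ?N W\<bar> \<le> ?N W / (2 ^ r) ^ 2 * prior_count (\<lambda>k x. k ! pos x = x ! pos x) xs"
    unfolding a_def using Cons.prems by (intro Cons.IH) auto
  have hit: "?N (\<lambda>T. W T \<and> tab_hash c T k = y) = ?N W / 2 ^ r" if "k \<in> set xs" for k
    using that Cons.prems by (intro tab_count_hash_eq_const[of k c s "pos k"]) auto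
  have step: "\<bar>?N (\<lambda>T. W T \<and> y \<notin> tab_hash c T ` set (x # xs)) - ?q * a\<bar>
      \<le> card {k \<in> set xs. k ! pos x = x ! pos x} * ?N W / (2 ^ r) ^ 2"
    unfolding a_def set_simps using Cons.prems
    by (intro tab_count_miss_insert) (auto intro!: Cons.prems(5) hit)
  have "0 \<le> ?q" "?q \<le> 1"
    by (simp_all add: field_simps)
  moreover have "?q * a - ?q ^ length (x # xs) * ?N W = ?q * (a - ?q ^ length xs * ?N W)"
    by (simp add: algebra_simps)
  ultimately have "\<bar>?q * a - ?q ^ length (x # xs) * ?N W\<bar> \<le> \<bar>a - ?q ^ length xs * ?N W\<bar>"
    by (simp add: abs_mult mult_left_le_one_le)
  with IH have "\<bar>?q * a - ?q ^ length (x # xs) * ?N W\<bar> \<le> ?N W / (2 ^ r) ^ 2 * prior_count (\<lambda>k x. k ! pos x = x ! pos x) xs"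
    by linarith
  with step show ?case
    by (simp add: algebra_simps abs_triangle_ineq[THEN order_trans])
qed

section \<open>A sum of truncated powers\<close>

lemma inverse_power_diff_ge:
  fixes M :: real
  assumes "M > 0"
  shows "k / (M + 1) ^ (k + 1) \<le> 1 / M ^ k - 1 / (M + 1) ^ k"
proof -
  have pos: "0 < M ^ k" "0 < (M + 1) ^ k"
    using assms by simp_all
  have "1 + k * (1 / M) \<le> (1 + 1 / M) ^ k"
    using assms by (intro Bernoulli_inequality) (simp add: le_divide_eq)
  also have "(1 + 1 / M) ^ k = (M + 1) ^ k / M ^ k"
    using assms by (simp add: field_simps power_divide)
  finally have bernoulli: "k / M \<le> (M + 1) ^ k / M ^ k - 1"
    by simp
  have "k / (M + 1) ^ (k + 1) = k / (M + 1) / (M + 1) ^ k"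
    by simp
  also have "\<dots> \<le> k / M / (M + 1) ^ k"
    using assms pos by (intro divide_right_mono divide_left_mono) auto
  also have "\<dots> \<le> ((M + 1) ^ k / M ^ k - 1) / (M + 1) ^ k"
    using bernoulli pos by (intro divide_right_mono) auto
  also have "\<dots> = 1 / M ^ k - 1 / (M + 1) ^ k"
    using assms by (simp add: diff_divide_distrib)
  finally show ?thesis .
qed

lemma sum_inverse_power_tail:
  assumes "1 \<le> T" "1 \<le> k"
  shows "(\<Sum>t\<in>{T<..M}. 1 / real t ^ (k + 1)) \<le> 1 / (k * real T ^ k)"
proof -
  have "(\<Sum>t\<in>{T<..M}. 1 / real t ^ (k + 1)) \<le> (1 / real T ^ k - 1 / real M ^ k) / k" if "T \<le> M"
    using that
  proof (induction M rule: dec_induct)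
    case (step M)
    have "{T<..Suc M} = insert (Suc M) {T<..M}"
      using step by auto
    moreover have "1 / real (Suc M) ^ (k + 1) \<le> (1 / real M ^ k - 1 / real (Suc M) ^ k) / k"
      using inverse_power_diff_ge[of "real M" k] step assms by (simp add: field_simps)
    ultimately show ?case
      using step by (simp add: add_divide_distrib[symmetric] diff_divide_distrib)
  qed simp
  moreover have "(1 / real T ^ k - 1 / real M ^ k) / k \<le> 1 / (k * real T ^ k)"
    using assms by (simp add: divide_right_mono field_simps)
  ultimately show ?thesis
    by (cases "T \<le> M") auto
qed

lemma powr_one_minus_inverse_power:
  assumes "1 \<le> m" "1 \<le> c"
  shows "(real m powr (1 - 1 / c)) ^ c = real m ^ (c - 1)"
proof -
  have "(real m powr (1 - 1 / c)) ^ c = real m powr ((1 - 1 / c) * c)"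
    using assms by (simp add: powr_realpow[symmetric] powr_powr)
  also have "(1 - 1 / c) * c = real (c - 1)"
    using assms by (simp add: field_simps of_nat_diff)
  also have "real m powr real (c - 1) = real m ^ (c - 1)"
    using assms by (intro powr_realpow) simp
  finally show ?thesis .
qed

text \<open>Split at \<open>\<tau> = \<beta> m^(1 - 1/c)\<close>: below it use \<open>g t \<le> m\<close>, above it the power decay;
  both parts contribute \<open>m \<tau> = \<beta> m^(2 - 1/c)\<close>.\<close>
lemma sum_min_power_le:
  fixes g :: "nat \<Rightarrow> real" and \<beta> :: real
  assumes c: "2 \<le> c" and m: "1 \<le> m" and \<beta>: "1 \<le> \<beta>"
    and g_le_m: "\<And>t. t \<in> {2..m} \<Longrightarrow> g t \<le> m"
    and g_le_power: "\<And>t. t \<in> {2..m} \<Longrightarrow> g t \<le> (\<beta> * m / t) ^ c"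
  shows "(\<Sum>t\<in>{2..m}. g t) \<le> 2 * \<beta> * real m powr (2 - 1 / c)"
proof -
  define \<tau> where "\<tau> = \<beta> * real m powr (1 - 1 / c)"
  define T where "T = nat \<lceil>\<tau>\<rceil>"
  define k where "k = c - 1"
  have "1 \<le> real m powr (1 - 1 / c)"
    using m c by (intro ge_one_powr_ge_zero) (auto simp: field_simps)
  then have \<tau>: "1 \<le> \<tau>"
    unfolding \<tau>_def using \<beta> mult_mono[OF \<beta>] by fastforce
  then have T: "1 \<le> T" "\<tau> \<le> T" "T < \<tau> + 1"
    unfolding T_def by linarith+
  have k: "1 \<le> k" "c = k + 1"
    unfolding k_def using c by auto
  have m_\<tau>: "m * \<tau> = \<beta> * real m powr (2 - 1 / c)"
    using m by (simp add: \<tau>_def powr_add[of m 1, simplified, symmetric] algebra_simps)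
  have "(\<beta> * m) ^ c = \<beta> ^ c * (m * m ^ k)"
    using k by (simp add: power_mult_distrib)
  also have "\<dots> = m * \<tau> ^ c"
    using powr_one_minus_inverse_power[OF m, of c] c
    by (simp add: \<tau>_def power_mult_distrib k_def mult.left_commute)
  finally have \<beta>m_power: "(\<beta> * m) ^ c = m * \<tau> ^ c" .
  have "(\<Sum>t\<in>{2..m}. g t) = (\<Sum>t\<in>{t\<in>{2..m}. t \<le> T}. g t) + (\<Sum>t\<in>{t\<in>{2..m}. T < t}. g t)"
    by (subst sum.union_disjoint[symmetric]) (auto intro: sum.cong)
  also have "(\<Sum>t\<in>{t\<in>{2..m}. t \<le> T}. g t) \<le> (\<Sum>t\<in>{t\<in>{2..m}. t \<le> T}. real m)"
    using g_le_m by (intro sum_mono) auto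
  also have "\<dots> \<le> (\<Sum>t\<in>{2..T}. real m)"
    by (intro sum_mono2) auto
  also have "(\<Sum>t\<in>{t\<in>{2..m}. T < t}. g t) \<le> (\<Sum>t\<in>{t\<in>{2..m}. T < t}. (\<beta> * m) ^ c * (1 / real t ^ (k + 1)))"
    using g_le_power k by (intro sum_mono) (auto simp: power_divide)
  also have "\<dots> \<le> (\<Sum>t\<in>{T<..m}. (\<beta> * m) ^ c * (1 / real t ^ (k + 1)))"
    using \<beta> by (intro sum_mono2) auto
  also have "\<dots> \<le> (\<beta> * m) ^ c * (1 / (k * real T ^ k))"
    unfolding sum_distrib_left[symmetric] using \<beta> T k by (intro mult_left_mono sum_inverse_power_tail) auto
  also have "\<dots> \<le> m * \<tau> ^ c * (1 / (k * \<tau> ^ k))"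
    unfolding \<beta>m_power using \<tau> T k
    by (intro mult_left_mono divide_left_mono mult_left_mono power_mono) auto
  also have "m * \<tau> ^ c * (1 / (k * \<tau> ^ k)) \<le> m * \<tau>"
    using \<tau> k by (simp add: field_simps mult_le_cancel_right1)
  finally have "(\<Sum>t\<in>{2..m}. g t) \<le> (real T - 1) * m + m * \<tau>"
    using T by (simp add: of_nat_diff algebra_simps)
  also have "\<dots> \<le> \<tau> * m + m * \<tau>"
    using T by (intro add_mono mult_right_mono) auto
  finally show ?thesis
    using m_\<tau> by (simp add: mult.commute)
qed

section \<open>Keys sharing characters\<close>

lemma card_lists_nth_in_le:
  assumes "L \<subseteq> {x. length x = c \<and> (\<forall>j<c. x ! j \<in> A j)}" "\<And>j. j < c \<Longrightarrow> finite (A j)"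
  shows "card L \<le> (\<Prod>j<c. card (A j))"
proof -
  let ?\<phi> = "\<lambda>x. restrict (\<lambda>j. x ! j) {..<c}"
  have "inj_on ?\<phi> L"
  proof (rule inj_onI)
    fix x y assume "x \<in> L" "y \<in> L" and eq: "?\<phi> x = ?\<phi> y"
    then have "length x = c" "length y = c"
      using assms(1) by auto
    moreover have "x ! j = y ! j" if "j < c" for j
      using fun_cong[OF eq, of j] that by simp
    ultimately show "x = y"
      by (intro nth_equalityI) auto
  qed
  moreover have "?\<phi> ` L \<subseteq> PiE {..<c} A"
    using assms(1) by (intro image_subsetI) (auto simp only: restrict_PiE_iff subset_iff mem_Collect_eq lessThan_iff)
  moreover have "finite (PiE {..<c} A)"
    using assms(2) by (intro finite_PiE) auto
  ultimately have "card L \<le> card (PiE {..<c} A)"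
    by (metis card_image card_mono)
  then show ?thesis
    by (simp add: card_PiE)
qed

definition char_count :: "nat list set \<Rightarrow> nat \<Rightarrow> nat \<Rightarrow> nat" where
  "char_count X j a = card {k \<in> X. k ! j = a}"

lemma card_heavy_chars_le:
  assumes "finite X" "1 \<le> t"
  shows "real (card {a \<in> (\<lambda>k. k ! j) ` X. t \<le> char_count X j a}) \<le> real (card X) / t"
proof -
  define H where "H = {a \<in> (\<lambda>k. k ! j) ` X. t \<le> char_count X j a}"
  have "t * card H = (\<Sum>a\<in>H. t)"
    by simp
  also have "\<dots> \<le> (\<Sum>a\<in>H. card {k \<in> X. k ! j = a})"
    by (intro sum_mono) (auto simp: H_def char_count_def)
  also have "\<dots> = card (\<Union>a\<in>H. {k \<in> X. k ! j = a})"
    using assms by (intro card_UN_disjoint[symmetric]) (auto simp: H_def)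
  also have "\<dots> \<le> card X"
    using assms by (intro card_mono) auto
  finally have "real t * real (card H) \<le> real (card X)"
    by (metis of_nat_le_iff of_nat_mult)
  then show ?thesis
    unfolding H_def[symmetric] using assms by (simp add: field_simps)
qed

lemma sum_pred_eq_sum_card_ge:
  fixes f :: "'a \<Rightarrow> nat"
  assumes "finite X" "\<And>x. x \<in> X \<Longrightarrow> 1 \<le> f x \<and> f x \<le> m"
  shows "(\<Sum>x\<in>X. f x - 1) = (\<Sum>t\<in>{2..m}. card {x \<in> X. t \<le> f x})"
proof -
  have "f x - 1 = card {t \<in> {2..m}. t \<le> f x}" if "x \<in> X" for x
  proof -
    have "{t \<in> {2..m}. t \<le> f x} = {2..f x}"
      using assms(2)[OF that] by auto
    then show ?thesis
      by simp
  qed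
  then have "(\<Sum>x\<in>X. f x - 1) = (\<Sum>x\<in>X. \<Sum>t\<in>{2..m}. if t \<le> f x then 1 else 0)"
    by (simp add: sum.If_cases Int_def)
  also have "\<dots> = (\<Sum>t\<in>{2..m}. card {x \<in> X. t \<le> f x})"
    using assms(1) by (subst sum.swap) (simp add: sum.If_cases Int_def)
  finally show ?thesis .
qed

lemma card_deep_keys_le:
  assumes X: "finite X" "\<And>x. x \<in> X \<Longrightarrow> length x = c"
    and B: "\<And>j. j < c \<Longrightarrow> finite (B j) \<and> card (B j) \<le> b"
    and pos_min: "\<And>x j. x \<in> X \<Longrightarrow> j < c \<Longrightarrow> x ! j \<notin> B j \<Longrightarrow>
      char_count X (pos x) (x ! pos x) \<le> char_count X j (x ! j)"
    and t: "1 \<le> t" "t \<le> card X"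
  shows "real (card {x \<in> X. t \<le> char_count X (pos x) (x ! pos x)}) \<le> ((1 + real b) * card X / t) ^ c"
proof -
  define A where "A j = {a \<in> (\<lambda>k. k ! j) ` X. t \<le> char_count X j a} \<union> B j" for j
  have "{x \<in> X. t \<le> char_count X (pos x) (x ! pos x)} \<subseteq> {x. length x = c \<and> (\<forall>j<c. x ! j \<in> A j)}"
    using X pos_min by (fastforce simp: A_def intro: order_trans)
  then have "card {x \<in> X. t \<le> char_count X (pos x) (x ! pos x)} \<le> (\<Prod>j<c. card (A j))"
    using X B by (intro card_lists_nth_in_le) (auto simp: A_def)
  then have "real (card {x \<in> X. t \<le> char_count X (pos x) (x ! pos x)}) \<le> (\<Prod>j<c. real (card (A j)))"
    by (metis of_nat_le_iff of_nat_prod)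
  also have "\<dots> \<le> (\<Prod>j<c. (1 + real b) * card X / t)"
  proof (intro prod_mono conjI)
    fix j assume "j \<in> {..<c}"
    then have "real (card (A j)) \<le> card X / t + b"
      using card_heavy_chars_le[OF X(1) t(1), of j] B card_Un_le[of _ "B j"] unfolding A_def
      by (smt (verit) lessThan_iff of_nat_add of_nat_le_iff)
    also have "\<dots> \<le> card X / t + b * (card X / t)"
      using t by (auto simp: le_divide_eq intro!: mult_left_mono)
    also have "\<dots> = (1 + real b) * card X / t"
      by (simp add: algebra_simps add_divide_distrib)
    finally show "real (card (A j)) \<le> (1 + real b) * card X / t" .
  qed simp
  finally show ?thesis
    by simp
qed

lemma sum_card_shared_char_le:
  assumes X: "finite X" "\<And>x. x \<in> X \<Longrightarrow> length x = c" and c: "1 \<le> c"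
    and B: "\<And>j. j < c \<Longrightarrow> finite (B j) \<and> card (B j) \<le> b"
    and pos: "\<And>x. x \<in> X \<Longrightarrow> pos x < c"
    and pos_min: "\<And>x j. x \<in> X \<Longrightarrow> j < c \<Longrightarrow> x ! j \<notin> B j \<Longrightarrow>
      char_count X (pos x) (x ! pos x) \<le> char_count X j (x ! j)"
  shows "real (\<Sum>x\<in>X. card {k \<in> X. k \<noteq> x \<and> k ! pos x = x ! pos x})
    \<le> 2 * (1 + real b) * real (card X) powr (2 - 1 / c)"
proof -
  define f where "f x = char_count X (pos x) (x ! pos x)" for x
  have f: "1 \<le> f x \<and> f x \<le> card X" if "x \<in> X" for x
    using that X(1) unfolding f_def char_count_def by (auto simp: Suc_le_eq card_gt_0_iff intro!: card_mono)
  have others: "card {k \<in> X. k \<noteq> x \<and> k ! pos x = x ! pos x} = f x - 1" if "x \<in> X" for x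
  proof -
    have "{k \<in> X. k \<noteq> x \<and> k ! pos x = x ! pos x} = {k \<in> X. k ! pos x = x ! pos x} - {x}"
      by auto
    then show ?thesis
      using that X(1) by (simp add: f_def char_count_def card_Diff_singleton)
  qed
  show ?thesis
  proof (cases "c = 1 \<or> X = {}")
    case True
    have "f x = 1" if "x \<in> X" for x
    proof -
      have "{k \<in> X. k ! pos x = x ! pos x} = {x}"
        using that X pos True by (auto intro: nth_equalityI)
      then show ?thesis
        by (simp add: f_def char_count_def)
    qed
    with True show ?thesis
      by (simp add: others)
  next
    case False
    have "real (\<Sum>x\<in>X. card {k \<in> X. k \<noteq> x \<and> k ! pos x = x ! pos x})
        = (\<Sum>t\<in>{2..card X}. real (card {x \<in> X. t \<le> f x}))"
      by (simp only: sum.cong[OF refl others] sum_pred_eq_sum_card_ge[OF X(1) f] of_nat_sum)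
    also have "\<dots> \<le> 2 * (1 + real b) * real (card X) powr (2 - 1 / c)"
    proof (rule sum_min_power_le)
      show "real (card {x \<in> X. t \<le> f x}) \<le> card X" for t
        using X by (intro of_nat_mono card_mono) auto
      show "real (card {x \<in> X. t \<le> f x}) \<le> ((1 + real b) * card X / t) ^ c" if "t \<in> {2..card X}" for t
        using that unfolding f_def by (intro card_deep_keys_le[OF X B pos_min]) auto
    qed (use c False X in \<open>auto simp: Suc_le_eq card_gt_0_iff\<close>)
    finally show ?thesis .
  qed
qed

lemma min_char_count_positionE:
  assumes "\<And>x. x \<in> X \<Longrightarrow> \<exists>j<c. x ! j \<notin> B j"
  obtains pos where "\<And>x. x \<in> X \<Longrightarrow> pos x < c \<and> x ! pos x \<notin> B (pos x)"
    and "\<And>x j. x \<in> X \<Longrightarrow> j < c \<Longrightarrow> x ! j \<notin> B j \<Longrightarrow>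
      char_count X (pos x) (x ! pos x) \<le> char_count X j (x ! j)"
proof -
  have "\<exists>j. (j < c \<and> x ! j \<notin> B j) \<and> (\<forall>j'. j' < c \<and> x ! j' \<notin> B j' \<longrightarrow>
      char_count X j (x ! j) \<le> char_count X j' (x ! j'))" if "x \<in> X" for x
    using assms[OF that] ex_has_least_nat[where P = "\<lambda>j. j < c \<and> x ! j \<notin> B j" and m = "\<lambda>j. char_count X j (x ! j)"]
    by blast
  then show ?thesis
    using that by metis
qed

section \<open>Non-empty bins\<close>

text \<open>\<open>B j\<close> holds the characters at position \<open>j\<close> whose table entries the conditioning event \<open>W\<close>
  may read: none for the plain statement, the character of the query key for the conditional one.\<close>
lemma tab_count_miss_le:
  fixes W :: "(nat \<Rightarrow> nat \<Rightarrow> nat) \<Rightarrow> bool" and B :: "nat \<Rightarrow> nat set"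
  assumes c: "1 \<le> c" and X: "X \<subseteq> tab_keys c s" and y: "y < 2 ^ r"
    and B: "\<And>j. j < c \<Longrightarrow> finite (B j) \<and> card (B j) \<le> b"
    and good: "\<And>x. x \<in> X \<Longrightarrow> \<exists>j<c. x ! j \<notin> B j"
    and W: "\<And>j a. j < c \<Longrightarrow> a \<notin> B j \<Longrightarrow> entry_invariant j a W"
    and collision: "\<And>k x. k \<in> X \<Longrightarrow> x \<in> X \<Longrightarrow> k \<noteq> x \<Longrightarrow>
      tab_count c s r (\<lambda>T. W T \<and> tab_hash c T k = tab_hash c T x) = tab_count c s r W / 2 ^ r"
  shows "\<bar>tab_count c s r (\<lambda>T. W T \<and> y \<notin> tab_hash c T ` X) - (1 - 1 / 2 ^ r) ^ card X * tab_count c s r W\<bar>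
    \<le> tab_count c s r W / (2 ^ r) ^ 2 * ((1 + real b) * real (card X) powr (2 - 1 / c))"
proof -
  let ?N = "tab_count c s r"
  have finite_X: "finite X"
    using X finite_tab_keys finite_subset by blast
  obtain pos where pos: "\<And>x. x \<in> X \<Longrightarrow> pos x < c \<and> x ! pos x \<notin> B (pos x)"
    and pos_min: "\<And>x j. x \<in> X \<Longrightarrow> j < c \<Longrightarrow> x ! j \<notin> B j \<Longrightarrow>
      char_count X (pos x) (x ! pos x) \<le> char_count X j (x ! j)"
    using min_char_count_positionE[OF good] by blast
  let ?R = "\<lambda>k x. k ! pos x = x ! pos x"
  have miss: "\<bar>?N (\<lambda>T. W T \<and> y \<notin> tab_hash c T ` X) - (1 - 1 / 2 ^ r) ^ card X * ?N W\<bar>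
      \<le> ?N W / (2 ^ r) ^ 2 * prior_count ?R zs" if zs: "set zs = X" "distinct zs" for zs
  proof -
    have "\<bar>?N (\<lambda>T. W T \<and> y \<notin> tab_hash c T ` set zs) - (1 - 1 / 2 ^ r) ^ length zs * ?N W\<bar>
      \<le> ?N W / (2 ^ r) ^ 2 * prior_count ?R zs"
      using zs X y pos W collision by (intro tab_count_miss_list) auto
    moreover have "card X = length zs"
      using zs distinct_card by blast
    ultimately show ?thesis
      using zs(1) by simp
  qed
  obtain xs where xs: "set xs = X" "distinct xs"
    using finite_distinct_list[OF finite_X] by blast
  have "prior_count ?R xs + prior_count ?R (rev xs) = (\<Sum>x\<in>X. card {k \<in> X. k \<noteq> x \<and> ?R k x})"
    using prior_count_add_rev[OF xs(2)] xs(1) by simp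
  also have "real \<dots> \<le> 2 * (1 + real b) * real (card X) powr (2 - 1 / c)"
    using X pos by (intro sum_card_shared_char_le[OF finite_X _ c B _ pos_min]) (auto simp: tab_keys_length)
  finally have prior_le: "real (prior_count ?R xs) + real (prior_count ?R (rev xs))
      \<le> 2 * ((1 + real b) * real (card X) powr (2 - 1 / c))"
    by (simp add: algebra_simps)
  define w where "w = ?N W / (2 ^ r) ^ 2"
  have "0 \<le> w"
    by (simp add: w_def tab_count_nonneg)
  from mult_left_mono[OF prior_le this]
  have "w * prior_count ?R xs + w * prior_count ?R (rev xs) \<le> 2 * (w * ((1 + real b) * real (card X) powr (2 - 1 / c)))"
    by (simp add: distrib_left mult.left_commute)
  with miss[OF xs] miss[of "rev xs"] xs show ?thesis
    unfolding w_def[symmetric] by simp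
qed

lemma tab_count_hit_ratio_le:
  fixes W :: "(nat \<Rightarrow> nat \<Rightarrow> nat) \<Rightarrow> bool" and B :: "nat \<Rightarrow> nat set"
  assumes c: "1 \<le> c" and X: "X \<subseteq> tab_keys c s" and y: "y < 2 ^ r"
    and B: "\<And>j. j < c \<Longrightarrow> finite (B j) \<and> card (B j) \<le> b"
    and good: "\<And>x. x \<in> X \<Longrightarrow> \<exists>j<c. x ! j \<notin> B j"
    and W: "\<And>j a. j < c \<Longrightarrow> a \<notin> B j \<Longrightarrow> entry_invariant j a W"
    and collision: "\<And>k x. k \<in> X \<Longrightarrow> x \<in> X \<Longrightarrow> k \<noteq> x \<Longrightarrow>
      tab_count c s r (\<lambda>T. W T \<and> tab_hash c T k = tab_hash c T x) = tab_count c s r W / 2 ^ r"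
    and W_pos: "0 < tab_count c s r W"
  shows "\<bar>tab_count c s r (\<lambda>T. W T \<and> y \<in> tab_hash c T ` X) / tab_count c s r W - p0 (2 ^ r) (card X)\<bar>
    \<le> (1 + real b) * real (card X) powr (2 - 1 / c) / (2 ^ r) ^ 2"
proof -
  let ?N = "tab_count c s r" and ?q = "(1 - 1 / 2 ^ r :: real) ^ card X"
  let ?miss = "?N (\<lambda>T. W T \<and> y \<notin> tab_hash c T ` X)"
  have "?N (\<lambda>T. W T \<and> y \<in> tab_hash c T ` X) / ?N W - p0 (2 ^ r) (card X) = (?q * ?N W - ?miss) / ?N W"
    using W_pos tab_count_split[of c s r W "\<lambda>T. y \<in> tab_hash c T ` X"]
    by (simp add: p0_def field_simps)
  then have "\<bar>?N (\<lambda>T. W T \<and> y \<in> tab_hash c T ` X) / ?N W - p0 (2 ^ r) (card X)\<bar> = \<bar>?miss - ?q * ?N W\<bar> / ?N W"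
    using W_pos by (simp add: abs_minus_commute)
  also have "\<dots> \<le> ?N W / (2 ^ r) ^ 2 * ((1 + real b) * real (card X) powr (2 - 1 / c)) / ?N W"
    using W_pos tab_count_miss_le[OF c X y B good W collision] by (intro divide_right_mono) auto
  also have "\<dots> = (1 + real b) * real (card X) powr (2 - 1 / c) / (2 ^ r) ^ 2"
    using W_pos by simp
  finally show ?thesis .
qed

lemma prob_mem_hash_image:
  assumes "1 \<le> c" "X \<subseteq> tab_keys c s" "y < 2 ^ r"
  shows "\<bar>measure_pmf.prob (tab_pmf c s r) {T. y \<in> tab_hash c T ` X} - p0 (2 ^ r) (card X)\<bar>
    \<le> real (card X) powr (2 - 1 / c) / (2 ^ r) ^ 2"
proof -
  have "\<bar>tab_count c s r (\<lambda>T. True \<and> y \<in> tab_hash c T ` X) / tab_count c s r (\<lambda>_. True) - p0 (2 ^ r) (card X)\<bar>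
      \<le> (1 + real 0) * real (card X) powr (2 - 1 / c) / (2 ^ r) ^ 2"
  proof (rule tab_count_hit_ratio_le[where B = "\<lambda>_. {}"])
    show "tab_count c s r (\<lambda>T. True \<and> tab_hash c T k = tab_hash c T x) = tab_count c s r (\<lambda>_. True) / 2 ^ r"
      if kx: "k \<in> X" "x \<in> X" "k \<noteq> x" for k x
    proof -
      obtain j where "j < c" "k ! j \<noteq> x ! j"
        using kx assms(2) tab_keys_nth_neq by blast
      then show ?thesis
        using kx assms(2) by (intro tab_count_hash_collision) (auto intro: entry_invariant_const)
    qed
  qed (use assms in \<open>auto intro!: exI[of _ 0] intro: entry_invariant_const tab_count_True_pos\<close>)
  then show ?thesis
    by (simp add: prob_tab_pmf)
qed

lemma expectation_card_hash_image:
  assumes "X \<subseteq> tab_keys c s"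
  shows "measure_pmf.expectation (tab_pmf c s r) (\<lambda>T. real (card (tab_hash c T ` X)))
    = (\<Sum>y<2 ^ r. measure_pmf.prob (tab_pmf c s r) {T. y \<in> tab_hash c T ` X})"
proof -
  have "real (card (tab_hash c T ` X)) = (\<Sum>y<2 ^ r. indicator {T. y \<in> tab_hash c T ` X} T)"
    if "T \<in> tab_tables c s r" for T
  proof -
    have "tab_hash c T ` X \<subseteq> {..<2 ^ r}"
      using that assms tab_hash_less by fastforce
    then show ?thesis
      by (simp add: indicator_def sum.If_cases Int_absorb1)
  qed
  then have "measure_pmf.expectation (tab_pmf c s r) (\<lambda>T. real (card (tab_hash c T ` X)))
      = measure_pmf.expectation (tab_pmf c s r) (\<lambda>T. \<Sum>y<2 ^ r. indicator {T. y \<in> tab_hash c T ` X} T)"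
    unfolding tab_pmf_def
    by (intro integral_cong_AE) (auto simp: AE_measure_pmf_iff finite_tab_tables tab_tables_nonempty)
  also have "\<dots> = (\<Sum>y<2 ^ r. measure_pmf.prob (tab_pmf c s r) {T. y \<in> tab_hash c T ` X})"
    by (subst Bochner_Integration.integral_sum) (auto intro: measure_pmf.integrable_const_bound[where B = 1])
  finally show ?thesis .
qed

lemma expectation_card_hash_image_p0:
  assumes "1 \<le> c" "X \<subseteq> tab_keys c s"
  shows "\<bar>measure_pmf.expectation (tab_pmf c s r) (\<lambda>T. real (card (tab_hash c T ` X)))
      - real (2 ^ r) * p0 (2 ^ r) (card X)\<bar>
    \<le> real (card X) powr (2 - 1 / c) / 2 ^ r"
proof -
  let ?M = "real (card X) powr (2 - 1 / c)"
  have "\<bar>(\<Sum>y<2 ^ r. measure_pmf.prob (tab_pmf c s r) {T. y \<in> tab_hash c T ` X}) - 2 ^ r * p0 (2 ^ r) (card X)\<bar>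
      = \<bar>\<Sum>y<2 ^ r. measure_pmf.prob (tab_pmf c s r) {T. y \<in> tab_hash c T ` X} - p0 (2 ^ r) (card X)\<bar>"
    by (simp add: sum_subtractf)
  also have "\<dots> \<le> (\<Sum>y<(2::nat) ^ r. ?M / (2 ^ r) ^ 2)"
    using assms by (intro order_trans[OF sum_abs] sum_mono prob_mem_hash_image) auto
  also have "\<dots> = ?M / 2 ^ r"
    by (simp add: power2_eq_square)
  finally show ?thesis
    using assms(2) by (simp add: expectation_card_hash_image)
qed

lemma cond_prob_mem_hash_image:
  assumes c: "1 \<le> c" and X: "X \<subseteq> tab_keys c s" and q: "q \<in> tab_keys c s - X"
    and y: "y < 2 ^ r" and z: "z < 2 ^ r"
  shows "\<bar>measure_pmf.prob (cond_pmf (tab_pmf c s r) {T. tab_hash c T q = z}) {T. y \<in> tab_hash c T ` X}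
      - p0 (2 ^ r) (card X)\<bar>
    \<le> 2 * real (card X) powr (2 - 1 / c) / (2 ^ r) ^ 2"
proof -
  let ?N = "tab_count c s r" and ?W = "\<lambda>T. tab_hash c T q = z"
  have W_inv: "entry_invariant j a ?W" if "a \<noteq> q ! j" for j a
    using that by (intro entry_invariant_hash_other) simp
  have "?N ?W = ?N (\<lambda>T. tab_hash c T q = z \<and> True)"
    by simp
  also have "\<dots> = ?N (\<lambda>_. True) / 2 ^ r"
    using c q z by (intro tab_count_hash_eq[of 0 _ q s "q ! 0"]) (auto intro: entry_invariant_const)
  finally have W_pos: "0 < ?N ?W"
    using tab_count_True_pos by simp
  have collision: "?N (\<lambda>T. ?W T \<and> tab_hash c T k = tab_hash c T x) = ?N ?W / 2 ^ r"
    if kx: "k \<in> X" "x \<in> X" "k \<noteq> x" for k x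
  proof -
    obtain j where j: "j < c" "k ! j \<noteq> x ! j"
      using kx X tab_keys_nth_neq by blast
    show ?thesis
    proof (cases "x ! j = q ! j")
      case True
      have "?N (\<lambda>T. ?W T \<and> tab_hash c T k = tab_hash c T x) = ?N (\<lambda>T. ?W T \<and> tab_hash c T x = tab_hash c T k)"
        by (intro tab_count_cong) auto
      also have "\<dots> = ?N ?W / 2 ^ r"
        using kx X j True W_inv by (intro tab_count_hash_collision) auto
      finally show ?thesis .
    next
      case False
      then show ?thesis
        using kx X j W_inv by (intro tab_count_hash_collision) auto
    qed
  qed
  have "\<bar>?N (\<lambda>T. ?W T \<and> y \<in> tab_hash c T ` X) / ?N ?W - p0 (2 ^ r) (card X)\<bar>
      \<le> (1 + real 1) * real (card X) powr (2 - 1 / c) / (2 ^ r) ^ 2"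
  proof (rule tab_count_hit_ratio_le[where B = "\<lambda>j. {q ! j}"])
    show "\<exists>j<c. x ! j \<notin> {q ! j}" if "x \<in> X" for x
      using that X q tab_keys_nth_neq[of x c s q] by (metis Diff_iff singletonD subsetD)
  qed (use c X y W_inv collision W_pos in auto)
  then show ?thesis
    by (simp add: prob_cond_tab_pmf[OF W_pos])
qed

theorem theorem1:
  fixes c s r m :: nat and X :: "nat list set" and y :: nat
  assumes "c \<ge> 1"
    and "X \<subseteq> tab_keys c s"
    and "card X = m"
    and "y < 2 ^ r"
  shows
    "\<bar>measure_pmf.prob (tab_pmf c s r) {T. y \<in> tab_hash c T ` X} - p0 (2 ^ r) m\<bar>
        \<le> real m powr (2 - 1 / real c) / (2 ^ r) ^ 2
     \<and> \<bar>measure_pmf.expectation (tab_pmf c s r) (\<lambda>T. real (card (tab_hash c T ` X)))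
          - real (2 ^ r) * p0 (2 ^ r) m\<bar>
        \<le> real m powr (2 - 1 / real c) / 2 ^ r
     \<and> (\<forall>q f z. q \<in> tab_keys c s - X \<longrightarrow> (\<forall>z'<2 ^ r. f z' < (2::nat) ^ r) \<longrightarrow> z < 2 ^ r \<longrightarrow>
          \<bar>measure_pmf.prob (cond_pmf (tab_pmf c s r) {T. tab_hash c T q = z})
              {T. f z \<in> tab_hash c T ` X} - p0 (2 ^ r) m\<bar>
            \<le> 2 * real m powr (2 - 1 / real c) / (2 ^ r) ^ 2)"
  using prob_mem_hash_image[OF assms(1,2,4)] expectation_card_hash_image_p0[OF assms(1,2)]
    cond_prob_mem_hash_image[OF assms(1,2)] assms(3)
  by blast

end
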